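(* Let $\kappa$ be an infinite cardinal and let $d>0$ and $m$ be natural numbers. Then \[ w\chi_{\rm CF}(\kappa^{+m},\kappa,d)\le \left\lfloor \frac{(m+1)(d-1)+1}{2}\right\rfloor+1 . \]
   Context: For a family $\mathcal A$ of sets and a cardinal $\rho$, a function $f$ with $\operatorname{dom}(f)\subseteq\bigcup\mathcal A$ and values in $\rho$ is a weak conflict free coloring of $\mathcal A$ if for every $A\in\mathcal A$ there is $\zeta<\rho$ with $|A\cap f^{-1}\{\zeta\}|=1$; $w\chi_{\rm CF}(\mathcal A)$ is the least $\rho$ admitting such a coloring. A family is $\mu$-almost disjoint if distinct members meet in fewer than $\mu$ points. A $(\lambda,\kappa,\mu)$-system is a $\mu$-almost disjoint family of $\lambda$ sets each of size $\kappa$ (members have at least two elements). For $\lambda\ge\kappa\ge\mu$, $\lambda$ infinite, $w\chi_{\rm CF}(\lambda,\kappa,\mu)=\sup\{w\chi_{\rm CF}(\mathcal A):\mathcal A$ a $(\lambda,\kappa,\mu)$-system$\}$. $\kappa^{+m}$ is the $m$-th successor cardinal of $\kappa$. *)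

theory Defs
  imports Main
begin

text \<open>has_card_suc_iter m K L: the set L has cardinality kappa^{+m}, where kappa = |K|.
  The intermediate cardinals are witnessed by subsets of L.\<close>
fun has_card_suc_iter :: "nat \<Rightarrow> 'k set \<Rightarrow> 'b set \<Rightarrow> bool" where
  "has_card_suc_iter 0 K L = ((card_of L, card_of K) \<in> ordIso)"
| "has_card_suc_iter (Suc m) K L =
     (\<exists>L'. L' \<subseteq> L \<and> has_card_suc_iter m K L' \<and> (card_of L, cardSuc (card_of L')) \<in> ordIso)"

definition almost_disjoint_fin :: "nat \<Rightarrow> 'a set set \<Rightarrow> bool" where
  "almost_disjoint_fin d \<A> \<longleftrightarrow>
     (\<forall>A\<in>\<A>. \<forall>B\<in>\<A>. A \<noteq> B \<longrightarrow> finite (A \<inter> B) \<and> card (A \<inter> B) < d)"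

definition is_system :: "nat \<Rightarrow> 'k set \<Rightarrow> nat \<Rightarrow> 'a set set \<Rightarrow> bool" where
  "is_system m K d \<A> \<longleftrightarrow>
     has_card_suc_iter m K \<A> \<and>
     (\<forall>A\<in>\<A>. (card_of A, card_of K) \<in> ordIso \<and> (\<exists>x y. x \<in> A \<and> y \<in> A \<and> x \<noteq> y)) \<and>
     almost_disjoint_fin d \<A>"

definition weak_cf_coloring :: "'a set set \<Rightarrow> nat \<Rightarrow> ('a \<Rightarrow> nat option) \<Rightarrow> bool" where
  "weak_cf_coloring \<A> \<rho> f \<longleftrightarrow>
     dom f \<subseteq> \<Union>\<A> \<and> ran f \<subseteq> {..<\<rho>} \<and>
     (\<forall>A\<in>\<A>. \<exists>\<zeta><\<rho>. card {x \<in> A. f x = Some \<zeta>} = 1)"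

end

theory Submission
  imports Defs "HOL-Algebra.Free_Abelian_Groups"
begin

text \<open>
  The proof is an induction on m of a stronger statement about extending partial colourings:
  if g colours points of a set Y that meets every member in finitely many points, and at most
  p of them in each member, then g extends outside Y to a weak conflict-free colouring with
  (p + m(d - 1) + d) div 2 + 1 colours.

  For m = 0 the members are enumerated in order type at most \<kappa>, and each member in turn
  receives at most one new coloured point, chosen outside the earlier members and outside every
  member that already contains d coloured points. Hence when A is reached at most p + d of its
  points are coloured, so with (p + d) div 2 + 1 colours either some colour occurs exactly once
  in A, or some colour does not occur in A and can be given to a point of A avoiding the fewer
  than \<kappa> forbidden sets.

  For the successor step the members are enumerated in order type at most \<kappa>^{+(m+1)}, and the
  initial segments are closed under adding members that meet their union in d points; these
  closures have size at most \<kappa>^{+m}. The members new at stage A meet the points of the earlier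
  closures in fewer than d points, so the induction hypothesis applies to them with p
  increased by d - 1.
\<close>

section \<open>Recursion and gluing along well-orders\<close>

lemma wo_rel_recursive_choice:
  assumes r: "wo_rel r"
    and cong: "\<And>a \<Phi> \<Phi>' c. (\<And>b. b \<in> underS r a \<Longrightarrow> \<Phi> b = \<Phi>' b) \<Longrightarrow> P a \<Phi> c \<Longrightarrow> P a \<Phi>' c"
    and ex: "\<And>a \<Phi>. a \<in> Field r \<Longrightarrow> (\<And>b. b \<in> underS r a \<Longrightarrow> P b \<Phi> (\<Phi> b)) \<Longrightarrow> \<exists>c. P a \<Phi> c"
  shows "\<exists>\<Phi>. \<forall>a\<in>Field r. P a \<Phi> (\<Phi> a)"
proof -
  define \<Phi> where "\<Phi> = wfrec (r - Id) (\<lambda>f a. SOME c. P a f c)"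
  note WF = wo_rel.WF[OF r]
  have below: "(b, a) \<in> r - Id \<longleftrightarrow> b \<in> underS r a" for a b
    by (auto simp: underS_def)
  have \<Phi>_eq: "\<Phi> a = (SOME c. P a (cut \<Phi> (r - Id) a) c)" for a
    unfolding \<Phi>_def by (subst wfrec[OF WF]) simp
  have "a \<in> Field r \<longrightarrow> P a \<Phi> (\<Phi> a)" for a
    using WF
  proof (induction a rule: wf_induct_rule)
    case (less a)
    show ?case
    proof
      assume a: "a \<in> Field r"
      have "P b \<Phi> (\<Phi> b)" if b: "b \<in> underS r a" for b
      proof -
        have "(b, a) \<in> r - Id" using b below by simp
        moreover have "b \<in> Field r" using b underS_Field by fast
        ultimately show ?thesis using less.IH by simp
      qed
      then obtain c where "P a \<Phi> c" using ex[OF a] by blast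
      then have "P a (cut \<Phi> (r - Id) a) c" by (rule cong[rotated]) (auto simp: cut_def underS_def)
      then have "P a (cut \<Phi> (r - Id) a) (\<Phi> a)" unfolding \<Phi>_eq[of a] by (rule someI)
      then show "P a \<Phi> (\<Phi> a)" by (rule cong[rotated]) (auto simp: cut_def underS_def)
    qed
  qed
  then show ?thesis by blast
qed

lemma wo_rel_finite_has_greatest:
  assumes r: "wo_rel r" and "finite T" "T \<noteq> {}" "T \<subseteq> Field r"
  shows "\<exists>m\<in>T. \<forall>b\<in>T. (b, m) \<in> r"
  using assms(2-4)
proof (induction T rule: finite_ne_induct)
  case (singleton a)
  then show ?case using wo_rel.REFL[OF r] by (simp add: refl_on_def)
next
  case (insert a T)
  then obtain m where m: "m \<in> T" "\<forall>b\<in>T. (b, m) \<in> r" by auto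
  have a: "a \<in> Field r" and "m \<in> Field r" using insert m by auto
  then consider "(a, m) \<in> r" | "(m, a) \<in> r" using wo_rel.TOTALS[OF r] by blast
  then show ?case
  proof cases
    case 2
    then have "\<forall>b\<in>T. (b, a) \<in> r" using m(2) wo_rel.TRANS[OF r] by (meson transD)
    then show ?thesis using a wo_rel.REFL[OF r] by (auto simp: refl_on_def)
  qed (use m in auto)
qed

lemma wo_rel_card_of: "wo_rel (card_of A)"
  by (simp add: wo_rel_def)

lemma in_underS_card_of:
  assumes "B \<in> underS (card_of \<A>) A"
  shows "B \<in> \<A> \<and> B \<noteq> A"
proof -
  have "B \<noteq> A" "(B, A) \<in> |\<A>|" using assms by (auto simp: underS_def)
  then show ?thesis using FieldI1[of B A "|\<A>|"] by simp
qed

lemma card_of_underS_ordLess: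
  assumes "|\<A>| \<le>o r" "A \<in> \<A>"
  shows "|underS (card_of \<A>) A| <o r"
proof -
  have "|underS (card_of \<A>) A| <o |\<A>|"
    using card_of_underS[where r = "|\<A>|" and a = A] card_of_Card_order assms(2) by simp
  then show ?thesis using assms(1) ordLess_ordLeq_trans by blast
qed

text \<open>On a point lying in several of the domains the value is an arbitrary one of theirs;
  all families glued below have pairwise disjoint domains.\<close>
definition glue :: "('i \<Rightarrow> 'a \<rightharpoonup> 'b) \<Rightarrow> 'i set \<Rightarrow> 'a \<rightharpoonup> 'b" where
  "glue \<Phi> I x = (if \<exists>i\<in>I. x \<in> dom (\<Phi> i) then Some (SOME y. \<exists>i\<in>I. \<Phi> i x = Some y) else None)"

lemma glue_cong:
  assumes "\<And>i. i \<in> I \<Longrightarrow> \<Phi> i = \<Psi> i"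
  shows "glue \<Phi> I = glue \<Psi> I"
proof -
  have "(\<exists>i\<in>I. x \<in> dom (\<Phi> i)) = (\<exists>i\<in>I. x \<in> dom (\<Psi> i))"
    and "(\<exists>i\<in>I. \<Phi> i x = Some y) = (\<exists>i\<in>I. \<Psi> i x = Some y)" for x y
    using assms by auto
  then show ?thesis unfolding glue_def by presburger
qed

lemma glue_some:
  assumes "glue \<Phi> I x = Some y"
  obtains i where "i \<in> I" "\<Phi> i x = Some y"
proof -
  from assms have "\<exists>i\<in>I. x \<in> dom (\<Phi> i)" and y: "y = (SOME y. \<exists>i\<in>I. \<Phi> i x = Some y)"
    unfolding glue_def by (auto split: if_splits)
  then have "\<exists>y. \<exists>i\<in>I. \<Phi> i x = Some y" by blast
  then have "\<exists>i\<in>I. \<Phi> i x = Some y" unfolding y by (rule someI_ex)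
  then show thesis using that by blast
qed

lemma dom_glue: "dom (glue \<Phi> I) = (\<Union>i\<in>I. dom (\<Phi> i))"
  by (auto simp: glue_def dom_def split: if_splits)

lemma ran_glue: "ran (glue \<Phi> I) \<subseteq> (\<Union>i\<in>I. ran (\<Phi> i))"
proof
  fix y assume "y \<in> ran (glue \<Phi> I)"
  then obtain x where "glue \<Phi> I x = Some y" by (auto simp: ran_def)
  then obtain i where "i \<in> I" "\<Phi> i x = Some y" by (rule glue_some)
  then show "y \<in> (\<Union>i\<in>I. ran (\<Phi> i))" by (auto intro: ranI)
qed

lemma glue_eq:
  assumes unique: "\<And>j. j \<in> I \<Longrightarrow> x \<in> dom (\<Phi> j) \<Longrightarrow> j = i"
    and i: "i \<in> I" "x \<in> dom (\<Phi> i)"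
  shows "glue \<Phi> I x = \<Phi> i x"
proof -
  have "x \<in> dom (glue \<Phi> I)" unfolding dom_glue using i by blast
  then obtain y where y: "glue \<Phi> I x = Some y" by auto
  then obtain j where j: "j \<in> I" "\<Phi> j x = Some y" by (rule glue_some)
  then have "j = i" using unique by (simp add: domIff)
  then show ?thesis using y j by simp
qed

lemma glue_on_region:
  assumes r: "wo_rel r"
    and dom: "\<And>a. a \<in> Field r \<Longrightarrow> dom (\<Phi> a) \<subseteq> Reg a - \<Union>(Reg ` underS r a)"
    and a: "a \<in> Field r" and x: "x \<in> Reg a"
  shows "glue \<Phi> (Field r) x = (glue \<Phi> (underS r a) ++ \<Phi> a) x"
proof -
  have comparable: "b = c \<or> b \<in> underS r c \<or> c \<in> underS r b"
    if "b \<in> Field r" "c \<in> Field r" for b c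
    using wo_rel.TOTALS[OF r] that by (auto simp: underS_def)
  have disjoint: "b = c" if "b \<in> Field r" "c \<in> Field r" "y \<in> dom (\<Phi> b)" "y \<in> dom (\<Phi> c)" for b c y
    using comparable[OF that(1,2)] dom that by blast
  have owner: "b \<in> underS r a" if "b \<in> Field r" "x \<in> dom (\<Phi> b)" "b \<noteq> a" for b
    using comparable[OF that(1) a] dom[OF that(1)] that x by blast
  have sub: "underS r a \<subseteq> Field r" unfolding underS_def Field_def by blast
  show ?thesis
  proof (cases "x \<in> dom (\<Phi> a)")
    case True
    then show ?thesis using glue_eq[of "Field r" x \<Phi> a] disjoint a by (simp add: map_add_dom_app_simps)
  next
    case False
    show ?thesis
    proof (cases "\<exists>b\<in>Field r. x \<in> dom (\<Phi> b)")
      case True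
      then obtain b where b: "b \<in> Field r" "x \<in> dom (\<Phi> b)" by blast
      then have "b \<in> underS r a" using owner False by blast
      then have "glue \<Phi> (underS r a) x = \<Phi> b x"
        using glue_eq[of "underS r a" x \<Phi> b] disjoint b sub by blast
      moreover have "glue \<Phi> (Field r) x = \<Phi> b x"
        using glue_eq[of "Field r" x \<Phi> b] disjoint b by blast
      ultimately show ?thesis using False by (simp add: map_add_dom_app_simps)
    next
      case none: False
      then have "x \<notin> dom (glue \<Phi> (Field r))" "x \<notin> dom (glue \<Phi> (underS r a))"
        using sub by (auto simp: dom_glue)
      then show ?thesis using False by (simp add: map_add_dom_app_simps domIff)
    qed
  qed
qed

definition has_unique_colour :: "'a set \<Rightarrow> nat \<Rightarrow> ('a \<rightharpoonup> nat) \<Rightarrow> bool" where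
  "has_unique_colour A \<rho> F \<longleftrightarrow> (\<exists>\<zeta><\<rho>. card {x \<in> A. F x = Some \<zeta>} = 1)"

lemma has_unique_colour_cong:
  assumes "\<And>x. x \<in> A \<Longrightarrow> F x = G x"
  shows "has_unique_colour A \<rho> F = has_unique_colour A \<rho> G"
proof -
  have "{x \<in> A. F x = Some \<zeta>} = {x \<in> A. G x = Some \<zeta>}" for \<zeta> using assms by auto
  then show ?thesis by (simp add: has_unique_colour_def)
qed

lemma exists_missing_colour:
  assumes fin: "finite (A \<inter> dom F)" and card: "card (A \<inter> dom F) \<le> N"
    and no_unique: "\<not> has_unique_colour A (N div 2 + 1) F"
  shows "\<exists>\<zeta> < N div 2 + 1. \<forall>x\<in>A. F x \<noteq> Some \<zeta>"
proof (rule ccontr)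
  define S where "S \<zeta> = {x \<in> A. F x = Some \<zeta>}" for \<zeta>
  assume "\<not> ?thesis"
  then have "S \<zeta> \<noteq> {}" if "\<zeta> < N div 2 + 1" for \<zeta> using that by (auto simp: S_def)
  moreover have S_sub: "S \<zeta> \<subseteq> A \<inter> dom F" for \<zeta> by (auto simp: S_def)
  moreover have "card (S \<zeta>) \<noteq> 1" if "\<zeta> < N div 2 + 1" for \<zeta>
    using no_unique that by (auto simp: has_unique_colour_def S_def)
  ultimately have twice: "2 \<le> card (S \<zeta>)" if "\<zeta> < N div 2 + 1" for \<zeta>
    using that fin by (metis One_nat_def card_0_eq finite_subset less_2_cases not_less)
  have "2 * (N div 2 + 1) = (\<Sum>\<zeta><N div 2 + 1. 2)" by simp
  also have "\<dots> \<le> (\<Sum>\<zeta><N div 2 + 1. card (S \<zeta>))" by (rule sum_mono) (use twice in auto)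
  also have "\<dots> = card (\<Union>\<zeta><N div 2 + 1. S \<zeta>)"
    using finite_subset[OF S_sub fin] by (intro card_UN_disjoint[symmetric]) (auto simp: S_def)
  also have "\<dots> \<le> card (A \<inter> dom F)" by (rule card_mono[OF fin]) (use S_sub in blast)
  finally have "2 * (N div 2 + 1) \<le> N" using card by linarith
  then show False by simp
qed

lemma has_unique_colour_fresh_point:
  assumes "x \<in> A" "\<forall>y\<in>A. F y \<noteq> Some \<zeta>" "\<zeta> < \<rho>"
  shows "has_unique_colour A \<rho> (F ++ [x \<mapsto> \<zeta>])"
proof -
  have "{y \<in> A. (F ++ [x \<mapsto> \<zeta>]) y = Some \<zeta>} = {x}"
    using assms by (auto simp: map_add_def split: option.splits)
  then show ?thesis using assms(3) unfolding has_unique_colour_def by (intro exI[of _ \<zeta>]) simp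
qed

lemma card_Int_dom_map_add_le:
  assumes "finite (B \<inter> dom g)" "card (B \<inter> dom g) \<le> p"
    and "finite (B \<inter> X)" "card (B \<inter> X) \<le> q" and "dom G \<subseteq> X"
  shows "finite (B \<inter> dom (g ++ G)) \<and> card (B \<inter> dom (g ++ G)) \<le> p + q"
proof -
  have sub: "B \<inter> dom (g ++ G) \<subseteq> (B \<inter> dom g) \<union> (B \<inter> X)" using assms(5) by auto
  then have "card (B \<inter> dom (g ++ G)) \<le> card ((B \<inter> dom g) \<union> (B \<inter> X))"
    using assms(1,3) by (intro card_mono) auto
  also have "\<dots> \<le> card (B \<inter> dom g) + card (B \<inter> X)" by (rule card_Un_le)
  finally have "card (B \<inter> dom (g ++ G)) \<le> p + q" using assms(2,4) by linarith
  moreover have "finite (B \<inter> dom (g ++ G))" by (rule finite_subset[OF sub]) (use assms(1,3) in simp)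
  ultimately show ?thesis by blast
qed

definition cf_extendable :: "'a set set \<Rightarrow> 'a set \<Rightarrow> nat \<Rightarrow> ('a \<rightharpoonup> nat) \<Rightarrow> bool" where
  "cf_extendable \<A> Y \<rho> g \<longleftrightarrow>
     (\<exists>h. dom h \<subseteq> \<Union>\<A> - Y \<and> ran h \<subseteq> {..<\<rho>} \<and> (\<forall>A\<in>\<A>. has_unique_colour A \<rho> (g ++ h)))"

lemma cf_extendable_by_glue:
  assumes dom: "\<And>A. A \<in> \<A> \<Longrightarrow> dom (\<Phi> A) \<subseteq> Reg A - \<Union>(Reg ` underS (card_of \<A>) A) - Y"
    and Reg: "\<And>A. A \<in> \<A> \<Longrightarrow> Reg A \<subseteq> \<Union>\<A>"
    and ran: "\<And>A. A \<in> \<A> \<Longrightarrow> ran (\<Phi> A) \<subseteq> {..<\<rho>}"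
    and unique: "\<And>B. B \<in> \<A> \<Longrightarrow>
      \<exists>A\<in>\<A>. B \<subseteq> Reg A \<and> has_unique_colour B \<rho> (g ++ glue \<Phi> (underS (card_of \<A>) A) ++ \<Phi> A)"
  shows "cf_extendable \<A> Y \<rho> g"
  unfolding cf_extendable_def
proof (intro exI conjI ballI)
  show "dom (glue \<Phi> \<A>) \<subseteq> \<Union>\<A> - Y" unfolding dom_glue using dom Reg by blast
  show "ran (glue \<Phi> \<A>) \<subseteq> {..<\<rho>}" using ran_glue[of \<Phi> \<A>] ran by blast
  fix B assume "B \<in> \<A>"
  then obtain A where A: "A \<in> \<A>" "B \<subseteq> Reg A"
    and B: "has_unique_colour B \<rho> (g ++ glue \<Phi> (underS (card_of \<A>) A) ++ \<Phi> A)"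
    using unique by blast
  have dom': "\<And>a. a \<in> Field (card_of \<A>) \<Longrightarrow> dom (\<Phi> a) \<subseteq> Reg a - \<Union>(Reg ` underS (card_of \<A>) a)"
    using dom by auto
  have "glue \<Phi> (Field (card_of \<A>)) x = (glue \<Phi> (underS (card_of \<A>) A) ++ \<Phi> A) x" if "x \<in> B" for x
    using glue_on_region[OF wo_rel_card_of dom', of A x] A that by auto
  then show "has_unique_colour B \<rho> (g ++ glue \<Phi> \<A>)"
    using B by (subst has_unique_colour_cong) (auto simp: map_add_def split: option.splits)
qed

lemma card_of_UN_finite_ordLess_infinite:
  assumes K: "infinite K" and I: "|I| <o |K|" and F: "\<And>i. i \<in> I \<Longrightarrow> finite (F i)"
  shows "|\<Union>i\<in>I. F i| <o |K|"
proof (cases "finite I")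
  case True
  then show ?thesis using F K by simp
next
  case False
  have "|\<Union>i\<in>I. F i| \<le>o |I|"
    using F False by (intro card_of_UNION_ordLeq_infinite) (auto intro: ordLess_imp_ordLeq)
  then show ?thesis using I ordLeq_ordLess_trans by blast
qed

lemma card_of_Fpow_ordLeq_infinite:
  assumes M: "infinite M" and X: "|X| \<le>o |M|"
  shows "|Fpow X| \<le>o |M|"
proof (cases "finite X")
  case True
  then have "finite (Fpow X)" by (simp add: Fpow_def)
  then show ?thesis using M by (simp add: ordLess_imp_ordLeq)
next
  case False
  then show ?thesis using X card_of_Fpow_infinite ordIso_ordLeq_trans by blast
qed

lemma card_of_Fpow_ordLess_infinite:
  assumes K: "infinite K" and X: "|X| <o |K|"
  shows "|Fpow X| <o |K|"
proof (cases "finite X")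
  case True
  then have "finite (Fpow X)" by (simp add: Fpow_def)
  then show ?thesis using K by simp
next
  case False
  then show ?thesis using X card_of_Fpow_infinite ordIso_ordLess_trans by blast
qed

lemma exists_point_outside_small_family:
  assumes K: "infinite K" and A: "|A| =o |K|" and \<S>: "|\<S>| <o |K|"
    and fin: "\<And>S. S \<in> \<S> \<Longrightarrow> finite (A \<inter> S)"
  shows "\<exists>x\<in>A. x \<notin> \<Union>\<S>"
proof (rule ccontr)
  assume "\<not> ?thesis"
  then have "A = (\<Union>S\<in>\<S>. A \<inter> S)" by blast
  moreover have "|\<Union>S\<in>\<S>. A \<inter> S| <o |K|" by (rule card_of_UN_finite_ordLess_infinite[OF K \<S> fin])
  ultimately show False using A not_ordLess_ordIso by metis
qed

lemma obtain_subset_card_eq: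
  assumes "\<not> (finite X \<and> card X < n)"
  obtains F where "F \<subseteq> X" "finite F" "card F = n"
  using assms infinite_arbitrarily_large obtain_subset_with_card_n by (metis not_less)

section \<open>Members meeting a set in at least d points\<close>

lemma almost_disjoint_fin_subset: "almost_disjoint_fin d \<A> \<Longrightarrow> \<B> \<subseteq> \<A> \<Longrightarrow> almost_disjoint_fin d \<B>"
  unfolding almost_disjoint_fin_def by blast

definition heavy_members :: "nat \<Rightarrow> 'a set set \<Rightarrow> 'a set \<Rightarrow> 'a set set" where
  "heavy_members d \<A> X = {B \<in> \<A>. \<exists>F \<subseteq> B \<inter> X. finite F \<and> card F = d}"

lemma heavy_members_subset: "heavy_members d \<A> X \<subseteq> \<A>"
  by (auto simp: heavy_members_def)

lemma heavy_members_mono: "X \<subseteq> X' \<Longrightarrow> heavy_members d \<A> X \<subseteq> heavy_members d \<A> X'"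
  unfolding heavy_members_def by blast

lemma not_heavy_member:
  assumes "B \<in> \<A>" "B \<notin> heavy_members d \<A> X"
  shows "finite (B \<inter> X) \<and> card (B \<inter> X) < d"
  using assms obtain_subset_card_eq[of "B \<inter> X" d] unfolding heavy_members_def by blast

lemma card_of_heavy_members:
  assumes AD: "almost_disjoint_fin d \<A>"
  shows "|heavy_members d \<A> X| \<le>o |Fpow X|"
proof -
  define f where "f B = (SOME F. F \<subseteq> B \<inter> X \<and> finite F \<and> card F = d)" for B
  have f: "f B \<subseteq> B \<inter> X \<and> finite (f B) \<and> card (f B) = d" if "B \<in> heavy_members d \<A> X" for B
  proof -
    have "\<exists>F. F \<subseteq> B \<inter> X \<and> finite F \<and> card F = d" using that unfolding heavy_members_def by blast
    then show ?thesis unfolding f_def by (rule someI_ex)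
  qed
  have "inj_on f (heavy_members d \<A> X)"
  proof (rule inj_onI, rule ccontr)
    fix B B' assume B: "B \<in> heavy_members d \<A> X" and B': "B' \<in> heavy_members d \<A> X"
      and eq: "f B = f B'" and ne: "B \<noteq> B'"
    then have "B \<in> \<A>" "B' \<in> \<A>" using heavy_members_subset by blast+
    then have "finite (B \<inter> B')" "card (B \<inter> B') < d"
      using AD ne unfolding almost_disjoint_fin_def by blast+
    moreover have "f B \<subseteq> B \<inter> B'" using f[OF B] f[OF B'] eq by auto
    ultimately show False using f[OF B] card_mono by (metis leD)
  qed
  moreover have "f ` heavy_members d \<A> X \<subseteq> Fpow X" using f by (auto simp: Fpow_def)
  ultimately show ?thesis using card_of_ordLeq by blast
qed

definition heavy_closed :: "nat \<Rightarrow> 'a set set \<Rightarrow> 'a set set \<Rightarrow> bool" where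
  "heavy_closed d \<A> \<D> \<longleftrightarrow> heavy_members d \<A> (\<Union>\<D>) \<subseteq> \<D>"

lemma heavy_closed_Union_chain:
  assumes d: "d > 0"
    and closed: "\<And>\<D>. \<D> \<in> \<C> \<Longrightarrow> heavy_closed d \<A> \<D>"
    and chain: "\<And>\<D> \<E>. \<D> \<in> \<C> \<Longrightarrow> \<E> \<in> \<C> \<Longrightarrow> \<D> \<subseteq> \<E> \<or> \<E> \<subseteq> \<D>"
  shows "heavy_closed d \<A> (\<Union>\<C>)"
  unfolding heavy_closed_def
proof
  fix B assume "B \<in> heavy_members d \<A> (\<Union>(\<Union>\<C>))"
  then obtain F where B: "B \<in> \<A>" and F: "F \<subseteq> B" "F \<subseteq> \<Union>(\<Union>\<C>)" "finite F" "card F = d"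
    unfolding heavy_members_def by auto
  then have F_Union: "F \<subseteq> \<Union>(Union ` \<C>)" by blast
  have "F \<noteq> {}" using F(4) d by auto
  then have "Union ` \<C> \<noteq> {}" using F_Union by auto
  moreover have "\<Union>\<D> \<subseteq> \<Union>\<E> \<or> \<Union>\<E> \<subseteq> \<Union>\<D>" if "\<D> \<in> \<C>" "\<E> \<in> \<C>" for \<D> \<E>
    using chain[OF that] by (meson Union_mono)
  then have "subset.chain UNIV (Union ` \<C>)" unfolding subset_chain_def by blast
  ultimately obtain \<D> where "\<D> \<in> \<C>" "F \<subseteq> \<Union>\<D>"
    using finite_subset_Union_chain[OF F(3) F_Union] by blast
  then show "B \<in> \<Union>\<C>"
    using B F closed unfolding heavy_closed_def heavy_members_def by blast
qed

primrec heavy_iterate :: "nat \<Rightarrow> 'a set set \<Rightarrow> 'a set set \<Rightarrow> nat \<Rightarrow> 'a set set" where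
  "heavy_iterate d \<A> \<S> 0 = \<S>"
| "heavy_iterate d \<A> \<S> (Suc n) =
     heavy_iterate d \<A> \<S> n \<union> heavy_members d \<A> (\<Union>(heavy_iterate d \<A> \<S> n))"

definition heavy_closure :: "nat \<Rightarrow> 'a set set \<Rightarrow> 'a set set \<Rightarrow> 'a set set" where
  "heavy_closure d \<A> \<S> = (\<Union>n. heavy_iterate d \<A> \<S> n)"

lemma heavy_iterate_mono: "m \<le> n \<Longrightarrow> heavy_iterate d \<A> \<S> m \<subseteq> heavy_iterate d \<A> \<S> n"
  by (rule lift_Suc_mono_le[of "heavy_iterate d \<A> \<S>"]) auto

lemma subset_heavy_closure: "\<S> \<subseteq> heavy_closure d \<A> \<S>"
  unfolding heavy_closure_def by (metis UN_upper UNIV_I heavy_iterate.simps(1))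

lemma heavy_closure_subset: "\<S> \<subseteq> \<A> \<Longrightarrow> heavy_closure d \<A> \<S> \<subseteq> \<A>"
proof -
  assume "\<S> \<subseteq> \<A>"
  then have "heavy_iterate d \<A> \<S> n \<subseteq> \<A>" for n
    by (induction n) (auto dest: subsetD[OF heavy_members_subset])
  then show ?thesis unfolding heavy_closure_def by blast
qed

lemma heavy_closure_mono: "\<S> \<subseteq> \<S>' \<Longrightarrow> heavy_closure d \<A> \<S> \<subseteq> heavy_closure d \<A> \<S>'"
proof -
  assume "\<S> \<subseteq> \<S>'"
  then have "heavy_iterate d \<A> \<S> n \<subseteq> heavy_iterate d \<A> \<S>' n" for n
  proof (induction n)
    case (Suc n)
    then have "heavy_members d \<A> (\<Union>(heavy_iterate d \<A> \<S> n))
        \<subseteq> heavy_members d \<A> (\<Union>(heavy_iterate d \<A> \<S>' n))"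
      by (intro heavy_members_mono Union_mono)
    then show ?case using Suc by auto
  qed simp
  then show ?thesis unfolding heavy_closure_def by blast
qed

lemma heavy_closed_heavy_closure: "heavy_closed d \<A> (heavy_closure d \<A> \<S>)"
  unfolding heavy_closed_def
proof
  let ?U = "\<lambda>n. \<Union>(heavy_iterate d \<A> \<S> n)"
  fix B assume "B \<in> heavy_members d \<A> (\<Union>(heavy_closure d \<A> \<S>))"
  then obtain F where B: "B \<in> \<A>"
    and F: "F \<subseteq> B" "F \<subseteq> \<Union>(heavy_closure d \<A> \<S>)" "finite F" "card F = d"
    unfolding heavy_members_def by auto
  have F_U: "F \<subseteq> (\<Union>n. ?U n)"
  proof
    fix x assume "x \<in> F"
    then obtain C where C: "x \<in> C" "C \<in> heavy_closure d \<A> \<S>" using F(2) by auto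
    then obtain n where "C \<in> heavy_iterate d \<A> \<S> n" unfolding heavy_closure_def by auto
    then show "x \<in> (\<Union>n. ?U n)" using C(1) by auto
  qed
  have mono: "?U m \<subseteq> ?U n" if "m \<le> n" for m n
    using Union_mono[OF heavy_iterate_mono[OF that]] .
  have "subset.chain UNIV (range ?U)"
    unfolding subset_chain_def
  proof (intro conjI ballI)
    fix X Y assume "X \<in> range ?U" "Y \<in> range ?U"
    then obtain m n where "X = ?U m" "Y = ?U n" by blast
    then show "X \<subseteq> Y \<or> Y \<subseteq> X" using mono[of m n] mono[of n m] by (cases "m \<le> n") auto
  qed simp
  then obtain n where "F \<subseteq> ?U n"
    using finite_subset_Union_chain[OF F(3) F_U] by blast
  then have "B \<in> heavy_iterate d \<A> \<S> (Suc n)" using B F by (auto simp: heavy_members_def)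
  then show "B \<in> heavy_closure d \<A> \<S>" unfolding heavy_closure_def by blast
qed

lemma card_of_heavy_closure:
  assumes AD: "almost_disjoint_fin d \<A>" and M: "infinite M" and mem: "\<And>A. A \<in> \<A> \<Longrightarrow> |A| \<le>o |M|"
    and \<S>: "\<S> \<subseteq> \<A>" "|\<S>| \<le>o |M|"
  shows "|heavy_closure d \<A> \<S>| \<le>o |M|"
proof -
  let ?T = "\<lambda>n. heavy_iterate d \<A> \<S> n"
  have T: "|?T n| \<le>o |M| \<and> ?T n \<subseteq> \<A>" for n
  proof (induction n)
    case (Suc n)
    then have "|\<Union>(?T n)| \<le>o |M|"
      using mem card_of_UNION_ordLeq_infinite[OF M, of "?T n" id] by auto
    then have "|heavy_members d \<A> (\<Union>(?T n))| \<le>o |M|"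
      using card_of_heavy_members[OF AD] card_of_Fpow_ordLeq_infinite[OF M] ordLeq_transitive by blast
    then have "|?T (Suc n)| \<le>o |M|"
      unfolding heavy_iterate.simps using Suc.IH card_of_Un_ordLeq_infinite[OF M] by blast
    moreover have "?T (Suc n) \<subseteq> \<A>"
      unfolding heavy_iterate.simps using Suc.IH heavy_members_subset by blast
    ultimately show ?case by blast
  qed (use \<S> in simp)
  have nat: "|UNIV :: nat set| \<le>o |M|" using infinite_iff_card_of_nat M by auto
  have "\<forall>n\<in>UNIV. |?T n| \<le>o |M|" using T by blast
  from card_of_UNION_ordLeq_infinite[OF M nat this] show ?thesis
    unfolding heavy_closure_def .
qed

text \<open>If A had d + 1 earlier coloured points, let x0 be the one coloured last, by B0. The other d
  points were coloured before B0, so A was a heavy member when B0 chose x0, and x0 \<notin> A.\<close>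
lemma card_earlier_points_le:
  assumes A: "A \<in> \<A>"
    and single: "\<And>B x y. B \<in> underS (card_of \<A>) A \<Longrightarrow> x \<in> dom (\<Phi> B) \<Longrightarrow> y \<in> dom (\<Phi> B) \<Longrightarrow> x = y"
    and avoid: "\<And>B. B \<in> underS (card_of \<A>) A \<Longrightarrow>
      dom (\<Phi> B) \<inter> \<Union>(heavy_members d (\<A> - {B}) (dom (glue \<Phi> (underS (card_of \<A>) B)))) = {}"
  shows "finite (A \<inter> dom (glue \<Phi> (underS (card_of \<A>) A)))
    \<and> card (A \<inter> dom (glue \<Phi> (underS (card_of \<A>) A))) \<le> d"
proof (rule ccontr)
  let ?C = "dom (glue \<Phi> (underS (card_of \<A>) A))"
  assume "\<not> ?thesis"
  then have "\<not> (finite (A \<inter> ?C) \<and> card (A \<inter> ?C) < Suc d)" by (simp add: less_Suc_eq_le)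
  then obtain F where F: "F \<subseteq> A \<inter> ?C" "finite F" "card F = Suc d"
    by (rule obtain_subset_card_eq)
  then have "\<forall>x\<in>F. \<exists>B. B \<in> underS (card_of \<A>) A \<and> x \<in> dom (\<Phi> B)" unfolding dom_glue by blast
  then obtain s where "\<forall>x\<in>F. s x \<in> underS (card_of \<A>) A \<and> x \<in> dom (\<Phi> (s x))"
    by (elim bchoice[THEN exE])
  then have s: "\<And>x. x \<in> F \<Longrightarrow> s x \<in> underS (card_of \<A>) A \<and> x \<in> dom (\<Phi> (s x))" by blast
  have s_inj: "x = y" if "x \<in> F" "y \<in> F" "s x = s y" for x y
    using single[of "s x" x y] s[OF that(1)] s[OF that(2)] that(3) by simp
  have "s ` F \<subseteq> Field (card_of \<A>)" using s underS_Field by fastforce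
  moreover have "F \<noteq> {}" using F(3) by auto
  ultimately obtain x0 where x0: "x0 \<in> F" "\<And>y. y \<in> F \<Longrightarrow> (s y, s x0) \<in> |\<A>|"
    using wo_rel_finite_has_greatest[OF wo_rel_card_of[of \<A>], where T = "s ` F"] F(2) by auto
  define B0 where "B0 = s x0"
  have B0: "B0 \<in> underS (card_of \<A>) A" "x0 \<in> dom (\<Phi> B0)" using s x0(1) by (auto simp: B0_def)
  have "F - {x0} \<subseteq> A \<inter> dom (glue \<Phi> (underS (card_of \<A>) B0))"
  proof
    fix y assume y: "y \<in> F - {x0}"
    then have "s y \<in> underS (card_of \<A>) B0" using x0 s_inj by (auto simp: B0_def underS_def)
    moreover have "y \<in> A" "y \<in> dom (\<Phi> (s y))" using s[of y] y F(1) by auto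
    ultimately show "y \<in> A \<inter> dom (glue \<Phi> (underS (card_of \<A>) B0))" unfolding dom_glue by blast
  qed
  moreover have "A \<in> \<A> - {B0}" using A B0(1) underS_notIn by fastforce
  moreover have "finite (F - {x0})" "card (F - {x0}) = d" using F x0(1) by auto
  ultimately have "A \<in> heavy_members d (\<A> - {B0}) (dom (glue \<Phi> (underS (card_of \<A>) B0)))"
    unfolding heavy_members_def by blast
  then show False using avoid[OF B0(1)] B0(2) x0(1) F(1) by blast
qed

section \<open>Precoloured systems and the base case\<close>

locale precoloured_system =
  fixes K :: "'k set" and \<A> :: "'a set set" and d :: nat
    and Y :: "'a set" and g :: "'a \<rightharpoonup> nat" and p :: nat
  assumes infinite_K: "infinite K"
    and almost_disjoint: "almost_disjoint_fin d \<A>"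
    and card_member: "\<And>A. A \<in> \<A> \<Longrightarrow> |A| =o |K|"
    and finite_Int_Y: "\<And>A. A \<in> \<A> \<Longrightarrow> finite (A \<inter> Y)"
    and dom_g: "dom g \<subseteq> Y"
    and card_Int_dom_g: "\<And>A. A \<in> \<A> \<Longrightarrow> card (A \<inter> dom g) \<le> p"
begin

abbreviation earlier :: "'a set \<Rightarrow> 'a set set" where
  "earlier A \<equiv> underS (card_of \<A>) A"

lemma finite_Int_dom_g: "A \<in> \<A> \<Longrightarrow> finite (A \<inter> dom g)"
  using finite_Int_Y dom_g by (meson Int_mono finite_subset order_refl)

end

locale small_precoloured_system = precoloured_system K \<A> d Y g p
  for K :: "'k set" and \<A> :: "'a set set" and d Y g p +
  assumes card_le_K: "|\<A>| \<le>o |K|"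
begin

text \<open>The colouring h chosen for A colours at most one new point of A, and avoids every
  other member that already contains d coloured points: this keeps the number of points
  coloured before any member at most d.\<close>
definition base_good :: "'a set \<Rightarrow> ('a set \<Rightarrow> 'a \<rightharpoonup> nat) \<Rightarrow> ('a \<rightharpoonup> nat) \<Rightarrow> bool" where
  "base_good A \<Phi> h \<longleftrightarrow>
     dom h \<subseteq> A - Y - \<Union>(earlier A) - \<Union>(heavy_members d (\<A> - {A}) (dom (glue \<Phi> (earlier A))))
     \<and> (\<forall>x\<in>dom h. \<forall>y\<in>dom h. x = y) \<and> ran h \<subseteq> {..<(p + d) div 2 + 1}
     \<and> has_unique_colour A ((p + d) div 2 + 1) (g ++ glue \<Phi> (earlier A) ++ h)"

lemma base_good_cong:
  assumes "\<And>B. B \<in> earlier A \<Longrightarrow> \<Phi> B = \<Psi> B" and "base_good A \<Phi> h"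
  shows "base_good A \<Psi> h"
  using assms glue_cong[of "earlier A" \<Phi> \<Psi>] unfolding base_good_def by simp

context
  fixes A and \<Phi> :: "'a set \<Rightarrow> 'a \<rightharpoonup> nat"
  assumes A: "A \<in> \<A>" and good: "\<And>B. B \<in> earlier A \<Longrightarrow> base_good B \<Phi> (\<Phi> B)"
begin

lemma dom_earlier_subset:
  assumes "B \<in> earlier A"
  shows "dom (\<Phi> B) \<subseteq> B - Y - \<Union>(earlier B) - \<Union>(heavy_members d (\<A> - {B}) (dom (glue \<Phi> (earlier B))))"
    and "\<forall>x\<in>dom (\<Phi> B). \<forall>y\<in>dom (\<Phi> B). x = y"
  using good[OF assms] unfolding base_good_def by blast+

lemma card_coloured_points_le:
  "finite (A \<inter> dom (g ++ glue \<Phi> (earlier A))) \<and> card (A \<inter> dom (g ++ glue \<Phi> (earlier A))) \<le> p + d"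
proof -
  have "finite (A \<inter> dom (glue \<Phi> (earlier A))) \<and> card (A \<inter> dom (glue \<Phi> (earlier A))) \<le> d"
    using dom_earlier_subset by (intro card_earlier_points_le[OF A]) blast+
  then show ?thesis
    using card_Int_dom_map_add_le finite_Int_dom_g[OF A] card_Int_dom_g[OF A] by blast
qed

lemma card_forbidden_sets:
  "|insert Y (earlier A \<union> heavy_members d (\<A> - {A}) (dom (glue \<Phi> (earlier A))))| <o |K|"
proof -
  have earlier: "|earlier A| <o |K|" using card_of_underS_ordLess[OF card_le_K A] .
  have "|dom (glue \<Phi> (earlier A))| <o |K|" unfolding dom_glue
  proof (rule card_of_UN_finite_ordLess_infinite[OF infinite_K earlier])
    fix B assume "B \<in> earlier A"
    then have "dom (\<Phi> B) \<subseteq> {x}" if "x \<in> dom (\<Phi> B)" for x using dom_earlier_subset(2) that by blast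
    then show "finite (dom (\<Phi> B))" by (metis finite.emptyI finite_insert finite_subset subsetI)
  qed
  then have heavy: "|heavy_members d (\<A> - {A}) (dom (glue \<Phi> (earlier A)))| <o |K|"
    using card_of_heavy_members[OF almost_disjoint_fin_subset[OF almost_disjoint, of "\<A> - {A}"]]
      card_of_Fpow_ordLess_infinite[OF infinite_K] ordLeq_ordLess_trans by blast
  have "|{Y} \<union> (earlier A \<union> heavy_members d (\<A> - {A}) (dom (glue \<Phi> (earlier A))))| <o |K|"
    using card_of_Un_singl_ordLess_infinite[OF infinite_K, THEN iffD1,
        OF card_of_Un_ordLess_infinite[OF infinite_K earlier heavy]] .
  then show ?thesis by simp
qed

lemma base_good_exists: "\<exists>h. base_good A \<Phi> h"
proof (cases "has_unique_colour A ((p + d) div 2 + 1) (g ++ glue \<Phi> (earlier A))")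
  case True
  then show ?thesis by (intro exI[of _ Map.empty]) (simp add: base_good_def)
next
  case False
  then obtain \<zeta> where \<zeta>: "\<zeta> < (p + d) div 2 + 1" "\<forall>x\<in>A. (g ++ glue \<Phi> (earlier A)) x \<noteq> Some \<zeta>"
    using exists_missing_colour card_coloured_points_le by blast
  define \<S> where "\<S> = insert Y (earlier A \<union> heavy_members d (\<A> - {A}) (dom (glue \<Phi> (earlier A))))"
  have "finite (A \<inter> S)" if "S \<in> \<S>" for S
  proof -
    from that consider "S = Y" | "S \<in> \<A>" "S \<noteq> A"
      unfolding \<S>_def
      using in_underS_card_of[of S] heavy_members_subset[of d "\<A> - {A}" "dom (glue \<Phi> (earlier A))"]
      by blast
    then show ?thesis
      using finite_Int_Y[OF A] almost_disjoint A unfolding almost_disjoint_fin_def by cases auto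
  qed
  then obtain x where x: "x \<in> A" "x \<notin> \<Union>\<S>"
    using exists_point_outside_small_family[OF infinite_K card_member[OF A]] card_forbidden_sets
    unfolding \<S>_def by blast
  show ?thesis
    using x \<zeta> has_unique_colour_fresh_point[OF x(1) \<zeta>(2) \<zeta>(1)]
    by (intro exI[of _ "[x \<mapsto> \<zeta>]"]) (auto simp: base_good_def \<S>_def)
qed

end

lemma cf_extendable_base: "cf_extendable \<A> Y ((p + d) div 2 + 1) g"
proof -
  have "\<exists>\<Phi>. \<forall>A\<in>Field (card_of \<A>). base_good A \<Phi> (\<Phi> A)"
  proof (rule wo_rel_recursive_choice[OF wo_rel_card_of])
    show "base_good A \<Psi> h" if "\<And>B. B \<in> earlier A \<Longrightarrow> \<Phi> B = \<Psi> B" "base_good A \<Phi> h" for A \<Phi> \<Psi> h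
      by (rule base_good_cong[OF that])
    show "\<exists>h. base_good A \<Phi> h"
      if "A \<in> Field (card_of \<A>)" "\<And>B. B \<in> earlier A \<Longrightarrow> base_good B \<Phi> (\<Phi> B)" for A \<Phi>
      using that by (intro base_good_exists) simp_all
  qed
  then obtain \<Phi> where \<Phi>: "\<And>A. A \<in> \<A> \<Longrightarrow> base_good A \<Phi> (\<Phi> A)" by auto
  show ?thesis
  proof (rule cf_extendable_by_glue[where Reg = "\<lambda>A. A"])
    show "dom (\<Phi> A) \<subseteq> A - \<Union>((\<lambda>A. A) ` earlier A) - Y" if "A \<in> \<A>" for A
      using \<Phi>[OF that] unfolding base_good_def by auto
    show "ran (\<Phi> A) \<subseteq> {..<(p + d) div 2 + 1}" if "A \<in> \<A>" for A
      using \<Phi>[OF that] unfolding base_good_def by auto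
    show "\<exists>A\<in>\<A>. B \<subseteq> A \<and> has_unique_colour B ((p + d) div 2 + 1) (g ++ glue \<Phi> (earlier A) ++ \<Phi> A)"
      if "B \<in> \<A>" for B
      using \<Phi>[OF that] that unfolding base_good_def by auto
  qed auto
qed

end

section \<open>The successor step\<close>

locale succ_precoloured_system = precoloured_system K \<A> d Y g p
  for K :: "'k set" and \<A> :: "'a set set" and d Y g p +
  fixes L :: "'b set" and \<rho> :: "nat \<Rightarrow> nat"
  assumes d_pos: "d > 0" and card_K_le_L: "|K| \<le>o |L|"
    and card_le_cardSuc: "|\<A>| \<le>o cardSuc |L|"
    and extendable_below: "\<And>(\<A>' :: 'a set set) Y' g' p'. |\<A>'| \<le>o |L| \<Longrightarrow>
      precoloured_system K \<A>' d Y' g' p' \<Longrightarrow> cf_extendable \<A>' Y' (\<rho> p') g'"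
begin

definition closure_below :: "'a set \<Rightarrow> 'a set set" where
  "closure_below A = heavy_closure d \<A> (under (card_of \<A>) A)"

definition new_members :: "'a set \<Rightarrow> 'a set set" where
  "new_members A = closure_below A - \<Union>(closure_below ` earlier A)"

definition old_points :: "'a set \<Rightarrow> 'a set" where
  "old_points A = \<Union>(\<Union>(closure_below ` earlier A))"

lemma closure_below_subset: "closure_below A \<subseteq> \<A>"
  unfolding closure_below_def using heavy_closure_subset under_Field[of "card_of \<A>" A] by simp

lemma new_members_subset: "new_members A \<subseteq> \<A>"
  unfolding new_members_def using closure_below_subset by blast

lemma closure_below_mono: "(B, A) \<in> |\<A>| \<Longrightarrow> closure_below B \<subseteq> closure_below A"
  unfolding closure_below_def
  by (rule heavy_closure_mono[OF under_incr[OF wo_rel.TRANS[OF wo_rel_card_of]]])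

lemma mem_closure_below_self: "A \<in> \<A> \<Longrightarrow> A \<in> closure_below A"
  using Refl_under_in[OF wo_rel.REFL[OF wo_rel_card_of[of \<A>]], of A] subset_heavy_closure
  unfolding closure_below_def by auto

lemma card_closure_below:
  assumes A: "A \<in> \<A>"
  shows "|closure_below A| \<le>o |L|"
proof -
  have L: "infinite L" using infinite_K card_K_le_L card_of_ordLeq_finite by blast
  have "|earlier A| <o cardSuc |L|" using card_of_underS_ordLess[OF card_le_cardSuc A] .
  then have "|earlier A| \<le>o |L|" by simp
  moreover have "|{A}| \<le>o |L|" using L by (simp add: ordLess_imp_ordLeq)
  ultimately have "|{A} \<union> earlier A| \<le>o |L|" by (rule card_of_Un_ordLeq_infinite[OF L, rotated])
  moreover have "under (card_of \<A>) A = {A} \<union> earlier A"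
    using Refl_under_underS[OF wo_rel.REFL[OF wo_rel_card_of[of \<A>]], of A] A by auto
  moreover have "|B| \<le>o |L|" if "B \<in> \<A>" for B
    using card_member[OF that] card_K_le_L ordIso_ordLeq_trans by blast
  ultimately show ?thesis unfolding closure_below_def
    using card_of_heavy_closure[OF almost_disjoint L] under_Field[of "card_of \<A>" A] by simp
qed

lemma heavy_closed_earlier_closures: "heavy_closed d \<A> (\<Union>(closure_below ` earlier A))"
proof (rule heavy_closed_Union_chain[OF d_pos])
  show "heavy_closed d \<A> \<D>" if "\<D> \<in> closure_below ` earlier A" for \<D>
    using that heavy_closed_heavy_closure unfolding closure_below_def by auto
  show "\<D> \<subseteq> \<E> \<or> \<E> \<subseteq> \<D>"
    if \<D>: "\<D> \<in> closure_below ` earlier A" and \<E>: "\<E> \<in> closure_below ` earlier A" for \<D> \<E>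
  proof -
    obtain B1 where B1: "B1 \<in> earlier A" "\<D> = closure_below B1" using \<D> by blast
    obtain B2 where B2: "B2 \<in> earlier A" "\<E> = closure_below B2" using \<E> by blast
    have "B1 \<in> \<A>" "B2 \<in> \<A>" using in_underS_card_of[OF B1(1)] in_underS_card_of[OF B2(1)] by auto
    then have "(B1, B2) \<in> |\<A>| \<or> (B2, B1) \<in> |\<A>|"
      using wo_rel.TOTALS[OF wo_rel_card_of[of \<A>]] by simp
    then show ?thesis using closure_below_mono[of B1 B2] closure_below_mono[of B2 B1] B1(2) B2(2) by blast
  qed
qed

lemma card_Int_old_points_less:
  assumes "B \<in> new_members A"
  shows "finite (B \<inter> old_points A) \<and> card (B \<inter> old_points A) < d"
proof -
  have "B \<in> \<A>" "B \<notin> \<Union>(closure_below ` earlier A)"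
    using assms new_members_subset unfolding new_members_def by auto
  then show ?thesis
    using heavy_closed_earlier_closures[of A] not_heavy_member
    unfolding heavy_closed_def old_points_def by blast
qed

lemma new_members_cover:
  assumes "B \<in> \<A>"
  shows "\<exists>A\<in>\<A>. B \<in> new_members A"
proof -
  have "B \<in> {A \<in> \<A>. B \<in> closure_below A}" using assms mem_closure_below_self by blast
  then obtain A where A: "A \<in> {A \<in> \<A>. B \<in> closure_below A}"
    and min: "\<And>A'. (A', A) \<in> |\<A>| - Id \<Longrightarrow> A' \<notin> {A \<in> \<A>. B \<in> closure_below A}"
    by (rule wfE_min[OF wo_rel.WF[OF wo_rel_card_of]]) blast
  have "B \<notin> closure_below A'" if "A' \<in> earlier A" for A'
    using min[of A'] that in_underS_card_of[OF that] by (auto simp: underS_def)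
  then show ?thesis using A unfolding new_members_def by blast
qed

definition succ_good :: "'a set \<Rightarrow> ('a set \<Rightarrow> 'a \<rightharpoonup> nat) \<Rightarrow> ('a \<rightharpoonup> nat) \<Rightarrow> bool" where
  "succ_good A \<Phi> h \<longleftrightarrow>
     dom h \<subseteq> \<Union>(new_members A) - (Y \<union> old_points A) \<and> ran h \<subseteq> {..<\<rho> (p + (d - 1))}
     \<and> (\<forall>B\<in>new_members A. has_unique_colour B (\<rho> (p + (d - 1))) (g ++ glue \<Phi> (earlier A) ++ h))"

lemma succ_good_cong:
  assumes "\<And>B. B \<in> earlier A \<Longrightarrow> \<Phi> B = \<Psi> B" and "succ_good A \<Phi> h"
  shows "succ_good A \<Psi> h"
  using assms glue_cong[of "earlier A" \<Phi> \<Psi>] unfolding succ_good_def by simp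

lemma succ_good_exists:
  assumes A: "A \<in> \<A>" and good: "\<And>B. B \<in> earlier A \<Longrightarrow> succ_good B \<Phi> (\<Phi> B)"
  shows "\<exists>h. succ_good A \<Phi> h"
proof -
  have "dom (\<Phi> B) \<subseteq> \<Union>(closure_below B)" if "B \<in> earlier A" for B
    using good[OF that] unfolding succ_good_def new_members_def by blast
  then have dom_old: "dom (glue \<Phi> (earlier A)) \<subseteq> old_points A"
    unfolding dom_glue old_points_def by blast
  have "precoloured_system K (new_members A) d (Y \<union> old_points A) (g ++ glue \<Phi> (earlier A)) (p + (d - 1))"
  proof
    fix B assume B: "B \<in> new_members A"
    then have "B \<in> \<A>" using new_members_subset by blast
    then show "|B| =o |K|" and "finite (B \<inter> (Y \<union> old_points A))"
      using card_member finite_Int_Y card_Int_old_points_less[OF B] by (auto simp: Int_Un_distrib)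
    show "card (B \<inter> dom (g ++ glue \<Phi> (earlier A))) \<le> p + (d - 1)"
      using card_Int_dom_map_add_le[OF _ _ _ _ dom_old] card_Int_old_points_less[OF B]
        finite_Int_dom_g[OF \<open>B \<in> \<A>\<close>] card_Int_dom_g[OF \<open>B \<in> \<A>\<close>] by fastforce
  qed (use infinite_K almost_disjoint_fin_subset[OF almost_disjoint new_members_subset] dom_g dom_old in auto)
  moreover have "|new_members A| \<le>o |L|"
    using card_of_mono1[of "new_members A" "closure_below A"] card_closure_below[OF A] ordLeq_transitive
    unfolding new_members_def by blast
  ultimately have "cf_extendable (new_members A) (Y \<union> old_points A) (\<rho> (p + (d - 1))) (g ++ glue \<Phi> (earlier A))"
    using extendable_below by blast
  then show ?thesis unfolding cf_extendable_def succ_good_def by auto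
qed

lemma cf_extendable_succ: "cf_extendable \<A> Y (\<rho> (p + (d - 1))) g"
proof -
  have "\<exists>\<Phi>. \<forall>A\<in>Field (card_of \<A>). succ_good A \<Phi> (\<Phi> A)"
  proof (rule wo_rel_recursive_choice[OF wo_rel_card_of])
    show "succ_good A \<Psi> h" if "\<And>B. B \<in> earlier A \<Longrightarrow> \<Phi> B = \<Psi> B" "succ_good A \<Phi> h" for A \<Phi> \<Psi> h
      by (rule succ_good_cong[OF that])
    show "\<exists>h. succ_good A \<Phi> h"
      if "A \<in> Field (card_of \<A>)" "\<And>B. B \<in> earlier A \<Longrightarrow> succ_good B \<Phi> (\<Phi> B)" for A \<Phi>
      using that by (intro succ_good_exists) simp_all
  qed
  then obtain \<Phi> where \<Phi>: "\<And>A. A \<in> \<A> \<Longrightarrow> succ_good A \<Phi> (\<Phi> A)" by auto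
  show ?thesis
  proof (rule cf_extendable_by_glue[where Reg = "\<lambda>A. \<Union>(closure_below A)"])
    show "dom (\<Phi> A) \<subseteq> \<Union>(closure_below A) - \<Union>((\<lambda>A. \<Union>(closure_below A)) ` earlier A) - Y"
      if "A \<in> \<A>" for A
      using \<Phi>[OF that] unfolding succ_good_def new_members_def old_points_def by blast
    show "\<Union>(closure_below A) \<subseteq> \<Union>\<A>" for A using closure_below_subset by blast
    show "ran (\<Phi> A) \<subseteq> {..<\<rho> (p + (d - 1))}" if "A \<in> \<A>" for A
      using \<Phi>[OF that] unfolding succ_good_def by blast
    show "\<exists>A\<in>\<A>. B \<subseteq> \<Union>(closure_below A)
        \<and> has_unique_colour B (\<rho> (p + (d - 1))) (g ++ glue \<Phi> (earlier A) ++ \<Phi> A)"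
      if B: "B \<in> \<A>" for B
    proof -
      obtain A where "A \<in> \<A>" "B \<in> new_members A" using new_members_cover[OF B] by blast
      then show ?thesis using \<Phi> unfolding succ_good_def new_members_def by blast
    qed
  qed
qed

end

lemma has_card_suc_iter_card_ge: "has_card_suc_iter m K L \<Longrightarrow> |K| \<le>o |L|"
proof (induction m arbitrary: L)
  case 0
  then show ?case by (simp add: ordIso_iff_ordLeq)
next
  case (Suc m)
  then obtain L' where L': "L' \<subseteq> L" "has_card_suc_iter m K L'" "|L| =o cardSuc |L'|" by auto
  have "|K| \<le>o |L'|" using Suc.IH[OF L'(2)] .
  also have "|L'| \<le>o cardSuc |L'|" by (rule cardSuc_ordLeq[OF card_of_Card_order])
  also have "cardSuc |L'| \<le>o |L|" using L'(3) ordIso_iff_ordLeq ordIso_symmetric by blast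
  finally show ?case .
qed

lemma cf_extendable_has_card_suc_iter:
  fixes K :: "'k set" and L :: "'b set" and \<A> :: "'a set set"
  assumes "has_card_suc_iter m K L" and "|\<A>| \<le>o |L|"
    and "precoloured_system K \<A> d Y g p" and d: "d > 0"
  shows "cf_extendable \<A> Y ((p + m * (d - 1) + d) div 2 + 1) g"
  using assms(1-3)
proof (induction m arbitrary: L \<A> Y g p)
  case 0
  then have "small_precoloured_system K \<A> d Y g p"
    using ordLeq_ordIso_trans by (simp add: small_precoloured_system_def small_precoloured_system_axioms_def)
  then show ?case using small_precoloured_system.cf_extendable_base by fastforce
next
  case (Suc m)
  then obtain L' where L': "L' \<subseteq> L" "has_card_suc_iter m K L'" "|L| =o cardSuc |L'|" by auto
  have "succ_precoloured_system K \<A> d Y g p L' (\<lambda>p. (p + m * (d - 1) + d) div 2 + 1)"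
    unfolding succ_precoloured_system_def succ_precoloured_system_axioms_def
    using Suc.prems(3) d has_card_suc_iter_card_ge[OF L'(2)] ordLeq_ordIso_trans[OF Suc.prems(2) L'(3)]
      Suc.IH[OF L'(2)] by blast
  from succ_precoloured_system.cf_extendable_succ[OF this]
  show ?case by (simp add: add.assoc)
qed

theorem theorem5p1:
  fixes K :: "'k set" and d m :: nat
  assumes "infinite K" and "d > 0"
  shows "\<forall>\<A> :: 'a set set. is_system m K d \<A> \<longrightarrow>
           (\<exists>f. weak_cf_coloring \<A> (((m + 1) * (d - 1) + 1) div 2 + 1) f)"
proof (intro allI impI)
  fix \<A> :: "'a set set"
  assume "is_system m K d \<A>"
  then have "has_card_suc_iter m K \<A>" and "precoloured_system K \<A> d {} Map.empty 0"
    using assms(1) unfolding is_system_def by (auto intro!: precoloured_system.intro)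
  then have "cf_extendable \<A> {} ((0 + m * (d - 1) + d) div 2 + 1) Map.empty"
    using cf_extendable_has_card_suc_iter ordLeq_refl[OF card_of_Card_order] assms(2) by blast
  moreover have "(0 + m * (d - 1) + d) div 2 + 1 = ((m + 1) * (d - 1) + 1) div 2 + 1"
    using assms(2) by (cases d) auto
  ultimately show "\<exists>f. weak_cf_coloring \<A> (((m + 1) * (d - 1) + 1) div 2 + 1) f"
    unfolding cf_extendable_def weak_cf_coloring_def has_unique_colour_def by auto
qed

end
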